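(* Let $D$ be an $\ell$-dimensional simplex and $\mathcal{F}$ a nonempty collection of faces of $D$, with $m=\#\mathcal{F}$. Then: (i) the union $\mathcal{P}=\bigcup_{F\in\mathcal{F}}F$ is a simplicial complex inside $D$, and the number of $k$-facets of $D$ contained in $\mathcal{P}$ is $\sum_{r=1}^m(-1)^{r-1}\binom{\ell+1-r}{k+1}\binom{m}{r}$; (ii) letting $\mathcal{C}$ be the set of facets of $D$ not contained in $\mathcal{P}$: (ii.1) every facet in $\mathcal{C}$ has codimension at most $\ell+1-m$; (ii.2) the number of facets in $\mathcal{C}$ of codimension $j$ is $\binom{\ell+1-m}{j}$; (ii.3) the total number of facets in $\mathcal{C}$ is $2^{\ell+1-m}$.
   Context: An $\ell$-simplex $D$ is the convex hull of $\ell+1$ affinely independent points (its vertices). For a nonempty subset $K$ of the vertices with $k+1$ elements, the convex hull of $K$ is a $k$-facet of $D$ (so $D$ itself is its unique $\ell$-facet). A face of $D$ is an $(\ell-1)$-facet. Codimension of a $k$-facet is $\ell-k$. *)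

theory Defs
  imports "HOL-Analysis.Analysis"
begin

definition is_facet :: "'a::euclidean_space set \<Rightarrow> nat \<Rightarrow> 'a set \<Rightarrow> bool" where
  "is_facet V k S \<longleftrightarrow> (\<exists>K. K \<subseteq> V \<and> card K = k + 1 \<and> S = convex hull K)"

definition is_face :: "'a::euclidean_space set \<Rightarrow> 'a set \<Rightarrow> bool" where
  "is_face V F \<longleftrightarrow> (\<exists>v\<in>V. F = convex hull (V - {v}))"

end

theory Submission
  imports Defs
begin

text \<open>Faces of the simplex are indexed by the vertices they omit; write \<open>W\<close> for the omitted
vertices of the chosen faces. Since convex hull is injective and monotone on subsets of an affinely
independent set, a facet \<open>conv K\<close> lies in the union of the chosen faces iff it lies in one of them
(look at a relative interior point), i.e. iff \<open>K\<close> misses some vertex of \<open>W\<close>. Part (i) is then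
inclusion--exclusion over the vertices of \<open>W\<close> that are missed, and the facets not in the union
are exactly the \<open>conv K\<close> with \<open>W \<subseteq> K\<close>, which correspond to the subsets \<open>V - K\<close> of \<open>V - W\<close>.\<close>

subsection \<open>Counting subsets\<close>

lemma int_card_UN:
  assumes "finite A" "\<And>a. a \<in> A \<Longrightarrow> finite (X a)"
  shows "int (card (\<Union>(X ` A))) =
    (\<Sum>B | B \<subseteq> A \<and> B \<noteq> {}. (- 1) ^ (card B + 1) * int (card (\<Inter>(X ` B))))"
proof -
  interpret Incl_Excl finite "int o card"
    by unfold_locales (auto simp add: card_Un_disjnt)
  show ?thesis
    using restricted_indexed[of A X] assms by auto
qed

lemma sum_nonempty_subsets_by_card:
  fixes g :: "nat \<Rightarrow> int"
  assumes "finite W"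
  shows "(\<Sum>B | B \<subseteq> W \<and> B \<noteq> {}. g (card B)) = (\<Sum>r=1..card W. int (card W choose r) * g r)"
proof -
  have fin: "finite {B. B \<subseteq> W \<and> B \<noteq> {}}"
    by (simp add: assms)
  have "\<exists>B\<subseteq>W. B \<noteq> {} \<and> r = card B" if "Suc 0 \<le> r" "r \<le> card W" for r
    using that by (metis Suc_le_D Zero_neq_Suc card_eq_0_iff obtain_subset_with_card_n)
  with assms finite_subset have card_eq: "card ` {B. B \<subseteq> W \<and> B \<noteq> {}} = {1..card W}"
    using not_less_eq_eq card_mono by (fastforce simp: image_iff)
  have "(\<Sum>B | B \<subseteq> W \<and> B \<noteq> {}. g (card B))
      = (\<Sum>r=1..card W. \<Sum>B | B \<subseteq> W \<and> B \<noteq> {} \<and> card B = r. g r)"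
    by (simp add: sum.image_gen[OF fin, where g=card] card_eq)
  also have "\<dots> = (\<Sum>r=1..card W. int (card W choose r) * g r)"
  proof (rule sum.cong[OF refl])
    fix r assume "r \<in> {1..card W}"
    then have "{B. B \<subseteq> W \<and> B \<noteq> {} \<and> card B = r} = {B. B \<subseteq> W \<and> card B = r}"
      by auto
    then show "(\<Sum>B | B \<subseteq> W \<and> B \<noteq> {} \<and> card B = r. g r) = int (card W choose r) * g r"
      using n_subsets[OF assms, of r] by simp
  qed
  finally show ?thesis .
qed

lemma int_card_subsets_not_superset:
  assumes "finite V" "W \<subseteq> V"
  shows "int (card {K. K \<subseteq> V \<and> card K = n \<and> \<not> W \<subseteq> K}) =
    (\<Sum>r=1..card W. (-1)^(r-1) * int ((card V - r) choose n) * int (card W choose r))"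
proof -
  define A where "A w = {K. K \<subseteq> V - {w} \<and> card K = n}" for w
  have finW: "finite W"
    using assms finite_subset by blast
  have "{K. K \<subseteq> V \<and> card K = n \<and> \<not> W \<subseteq> K} = \<Union>(A ` W)"
    using assms(2) by (auto simp: A_def)
  moreover have "finite (A w)" for w
    using assms(1) by (auto simp: A_def)
  ultimately have "int (card {K. K \<subseteq> V \<and> card K = n \<and> \<not> W \<subseteq> K}) =
      (\<Sum>B | B \<subseteq> W \<and> B \<noteq> {}. (- 1) ^ (card B + 1) * int (card (\<Inter>(A ` B))))"
    using int_card_UN[OF finW, of A] by simp
  also have "\<dots> = (\<Sum>B | B \<subseteq> W \<and> B \<noteq> {}. (- 1) ^ (card B + 1) * int ((card V - card B) choose n))"
  proof (rule sum.cong[OF refl])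
    fix B assume "B \<in> {B. B \<subseteq> W \<and> B \<noteq> {}}"
    then have "\<Inter>(A ` B) = {K. K \<subseteq> V - B \<and> card K = n}" "card (V - B) = card V - card B"
      using assms by (auto simp: A_def card_Diff_subset finite_subset)
    then show "(- 1) ^ (card B + 1) * int (card (\<Inter>(A ` B))) =
        (- 1) ^ (card B + 1) * int ((card V - card B) choose n)"
      using n_subsets[of "V - B" n] assms(1) by simp
  qed
  also have "\<dots> = (\<Sum>r=1..card W. int (card W choose r) * ((- 1) ^ (r + 1) * int ((card V - r) choose n)))"
    using sum_nonempty_subsets_by_card[OF finW] .
  also have "\<dots> = (\<Sum>r=1..card W. (-1)^(r-1) * int ((card V - r) choose n) * int (card W choose r))"
    by (rule sum.cong) (auto simp: power_diff)
  finally show ?thesis .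
qed

lemma bij_betw_supersets_Pow_Diff:
  assumes "W \<subseteq> V"
  shows "bij_betw (\<lambda>K. V - K) {K. W \<subseteq> K \<and> K \<subseteq> V} (Pow (V - W))"
  by (rule bij_betw_byWitness[where f'="\<lambda>L. V - L"]) (use assms in auto)

lemma card_supersets:
  assumes "finite V" "W \<subseteq> V"
  shows "card {K. W \<subseteq> K \<and> K \<subseteq> V} = 2 ^ card (V - W)"
  using bij_betw_same_card[OF bij_betw_supersets_Pow_Diff[OF assms(2)]] assms(1)
  by (simp add: card_Pow)

lemma card_supersets_with_card:
  assumes "finite V" "W \<subseteq> V"
  shows "card {K. W \<subseteq> K \<and> K \<subseteq> V \<and> card K + j = card V} = card (V - W) choose j"
proof -
  have card_Diff: "card (V - K) + card K = card V" if "K \<subseteq> V" for K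
    using that assms(1) by (simp add: card_Diff_subset finite_subset card_mono)
  have "(\<lambda>K. V - K) ` {K. W \<subseteq> K \<and> K \<subseteq> V \<and> card K + j = card V} =
      {L. L \<subseteq> V - W \<and> card L = j}"
  proof (intro equalityI subsetI)
    fix L assume "L \<in> (\<lambda>K. V - K) ` {K. W \<subseteq> K \<and> K \<subseteq> V \<and> card K + j = card V}"
    then obtain K where "W \<subseteq> K" "K \<subseteq> V" "card K + j = card V" "L = V - K"
      by blast
    then show "L \<in> {L. L \<subseteq> V - W \<and> card L = j}"
      using card_Diff[of K] by auto
  next
    fix L assume "L \<in> {L. L \<subseteq> V - W \<and> card L = j}"
    then have "L \<subseteq> V - W" "V - L \<in> {K. W \<subseteq> K \<and> K \<subseteq> V \<and> card K + j = card V}"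
      using card_Diff[of L] assms(2) by auto
    then show "L \<in> (\<lambda>K. V - K) ` {K. W \<subseteq> K \<and> K \<subseteq> V \<and> card K + j = card V}"
      by (intro image_eqI[where x="V - L"]) auto
  qed
  then have "bij_betw (\<lambda>K. V - K) {K. W \<subseteq> K \<and> K \<subseteq> V \<and> card K + j = card V}
      {L. L \<subseteq> V - W \<and> card L = j}"
    by (intro bij_betw_subset[OF bij_betw_supersets_Pow_Diff[OF assms(2)]]) auto
  then show ?thesis
    using n_subsets[of "V - W" j] assms(1) by (simp add: bij_betw_same_card)
qed

subsection \<open>Subsimplices of a simplex\<close>

lemma inj_on_convex_hull_Pow:
  fixes V :: "'a::euclidean_space set"
  assumes "\<not> affine_dependent V"
  shows "inj_on (\<lambda>K. convex hull K) (Pow V)"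
proof (rule inj_onI)
  fix K K' assume KK': "K \<in> Pow V" "K' \<in> Pow V" "convex hull K = convex hull K'"
  have "\<not> affine_dependent K" "\<not> affine_dependent K'"
    using assms KK' affine_dependent_subset by blast+
  then have "K = {x. x extreme_point_of convex hull K}" "K' = {x. x extreme_point_of convex hull K'}"
    by (simp_all add: extreme_point_of_convex_hull_affine_independent)
  with KK'(3) show "K = K'"
    by metis
qed

lemma convex_hull_subset_affine_independent_iff:
  fixes V :: "'a::euclidean_space set"
  assumes "\<not> affine_dependent V" "K \<subseteq> V" "K' \<subseteq> V"
  shows "convex hull K \<subseteq> convex hull K' \<longleftrightarrow> K \<subseteq> K'"
proof
  assume "convex hull K \<subseteq> convex hull K'"
  moreover have "\<not> affine_dependent (K \<union> K')"
    using assms affine_dependent_subset by (metis Un_subset_iff)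
  ultimately have "convex hull (K \<inter> K') = convex hull K"
    using convex_hull_Int by blast
  then have "K \<inter> K' = K"
    using inj_onD[OF inj_on_convex_hull_Pow[OF assms(1)]] assms(2) by blast
  then show "K \<subseteq> K'" by blast
qed (simp add: hull_mono)

lemma is_facet_convex_hull_iff:
  fixes V :: "'a::euclidean_space set"
  assumes "\<not> affine_dependent V" "K \<subseteq> V"
  shows "is_facet V k (convex hull K) \<longleftrightarrow> card K = k + 1"
  using inj_on_convex_hull_Pow[OF assms(1)] assms(2)
  by (auto simp: is_facet_def dest: inj_onD)

lemma is_facet_convex_hull:
  fixes V :: "'a::euclidean_space set"
  assumes "\<not> affine_dependent V" "K \<subseteq> V" "K \<noteq> {}"
  shows "is_facet V (card K - 1) (convex hull K)"
proof -
  have "finite K"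
    using assms(1,2) aff_independent_finite finite_subset by blast
  with assms(3) have "card K = card K - 1 + 1"
    by (simp add: card_gt_0_iff)
  then show ?thesis
    using is_facet_convex_hull_iff[OF assms(1,2)] by simp
qed

lemma simplicial_complex_convex_hull_subsets:
  fixes V :: "'a::euclidean_space set"
  assumes indep: "\<not> affine_dependent V"
  shows "simplicial_complex {S. \<exists>K. K \<subseteq> V \<and> S = convex hull K \<and> S \<subseteq> P}"
    (is "simplicial_complex ?SC")
  unfolding simplicial_complex_def
proof (intro conjI allI impI ballI)
  have "?SC \<subseteq> (\<lambda>K. convex hull K) ` Pow V"
    by blast
  then show "finite ?SC"
    by (rule finite_subset) (simp add: aff_independent_finite[OF indep])
next
  fix S assume "S \<in> ?SC"
  then obtain K where "K \<subseteq> V" "S = convex hull K" by blast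
  moreover from this have "\<not> affine_dependent K"
    using indep affine_dependent_subset by blast
  ultimately show "\<exists>n. n simplex S"
    unfolding simplex_def by (intro exI[of _ "int (card K) - 1"]) auto
next
  fix F S assume "S \<in> ?SC \<and> F face_of S"
  then obtain K where K: "K \<subseteq> V" "convex hull K \<subseteq> P" "F face_of convex hull K"
    by auto
  have "\<not> affine_dependent K"
    using K(1) indep affine_dependent_subset by blast
  with K(3) obtain c where c: "c \<subseteq> K" "F = convex hull c"
    by (auto simp: face_of_convex_hull_affine_independent)
  have "convex hull c \<subseteq> convex hull K"
    using c(1) by (rule hull_mono)
  with c K show "F \<in> ?SC"
    by (intro CollectI exI[of _ c]) auto
next
  fix S S' assume "S \<in> ?SC \<and> S' \<in> ?SC"
  then obtain K K' where K: "K \<subseteq> V" "S = convex hull K" and K': "K' \<subseteq> V" "S' = convex hull K'"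
    by auto
  have "\<not> affine_dependent (K \<union> K')" "\<not> affine_dependent K"
    using K(1) K'(1) indep affine_dependent_subset by (metis Un_subset_iff)+
  then have "S \<inter> S' = convex hull (K \<inter> K')"
    using K K' convex_hull_Int by blast
  moreover have "convex hull (K \<inter> K') face_of convex hull K"
    using \<open>\<not> affine_dependent K\<close> by (auto simp: face_of_convex_hull_affine_independent)
  ultimately show "(S \<inter> S') face_of S"
    using K(2) by simp
qed

subsection \<open>Unions of faces\<close>

definition opposite_faces :: "'a::euclidean_space set \<Rightarrow> 'a set \<Rightarrow> 'a set" where
  "opposite_faces V W = (\<Union>w\<in>W. convex hull (V - {w}))"

lemma faces_eq_opposite_faces_image:
  fixes V :: "'a::euclidean_space set"
  assumes "\<not> affine_dependent V" "\<forall>F\<in>\<F>. is_face V F"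
  obtains W where "W \<subseteq> V" "\<F> = (\<lambda>w. convex hull (V - {w})) ` W" "card W = card \<F>"
proof
  let ?W = "{w\<in>V. convex hull (V - {w}) \<in> \<F>}"
  show "?W \<subseteq> V"
    by blast
  show F_eq: "\<F> = (\<lambda>w. convex hull (V - {w})) ` ?W"
    using assms(2) by (auto simp: is_face_def)
  have "inj_on (\<lambda>w. convex hull (V - {w})) V"
  proof (rule inj_onI)
    fix v w assume "v \<in> V" "w \<in> V" "convex hull (V - {v}) = convex hull (V - {w})"
    then have "V - {v} = V - {w}"
      using inj_onD[OF inj_on_convex_hull_Pow[OF assms(1)]] by blast
    with \<open>v \<in> V\<close> show "v = w"
      by blast
  qed
  then have "card ((\<lambda>w. convex hull (V - {w})) ` ?W) = card ?W"
    by (rule card_image[OF inj_on_subset]) blast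
  then show "card ?W = card \<F>"
    by (simp only: F_eq[symmetric])
qed

lemma Union_convex_hull_subsets_opposite_faces:
  assumes "W \<subseteq> V"
  shows "\<Union>{S. \<exists>K. K \<subseteq> V \<and> S = convex hull K \<and> S \<subseteq> opposite_faces V W} = opposite_faces V W"
proof (intro equalityI subsetI)
  fix x assume "x \<in> opposite_faces V W"
  then obtain w where "w \<in> W" "x \<in> convex hull (V - {w})"
    by (auto simp: opposite_faces_def)
  moreover from this have "convex hull (V - {w}) \<subseteq> opposite_faces V W"
    by (auto simp: opposite_faces_def)
  ultimately show "x \<in> \<Union>{S. \<exists>K. K \<subseteq> V \<and> S = convex hull K \<and> S \<subseteq> opposite_faces V W}"
    by (intro UnionI[of "convex hull (V - {w})"] CollectI exI[of _ "V - {w}"]) auto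
qed auto

lemma convex_hull_subset_opposite_faces_iff:
  fixes V :: "'a::euclidean_space set"
  assumes indep: "\<not> affine_dependent V" and "K \<subseteq> V"
  shows "convex hull K \<subseteq> opposite_faces V W \<longleftrightarrow> K = {} \<or> \<not> W \<subseteq> K"
proof
  assume sub: "convex hull K \<subseteq> opposite_faces V W"
  show "K = {} \<or> \<not> W \<subseteq> K"
  proof (rule ccontr)
    assume "\<not> (K = {} \<or> \<not> W \<subseteq> K)"
    then have "rel_interior (convex hull K) \<noteq> {}" and WK: "W \<subseteq> K"
      by (auto simp: rel_interior_eq_empty)
    then obtain x where x: "x \<in> rel_interior (convex hull K)" by blast
    with sub obtain w where w: "w \<in> W" "x \<in> convex hull (V - {w})"
      using rel_interior_subset by (force simp: opposite_faces_def)
    \<comment> \<open>a face of the simplex meeting the relative interior of the subsimplex contains it\<close>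
    have "convex hull (V - {w}) face_of convex hull V"
      using face_of_convex_hull_affine_independent[OF indep] by blast
    moreover have "convex hull K \<subseteq> convex hull V"
      using assms(2) hull_mono by blast
    ultimately have "convex hull K \<subseteq> convex hull (V - {w})"
      using subset_of_face_of x w by blast
    then have "K \<subseteq> V - {w}"
      using convex_hull_subset_affine_independent_iff[OF indep assms(2)] by blast
    with w WK show False by blast
  qed
next
  assume "K = {} \<or> \<not> W \<subseteq> K"
  then consider "K = {}" | w where "w \<in> W" "K \<subseteq> V - {w}"
    using assms(2) by blast
  then show "convex hull K \<subseteq> opposite_faces V W"
  proof cases
    case 2
    then have "convex hull K \<subseteq> convex hull (V - {w})"
      by (simp add: hull_mono)
    with 2 show ?thesis
      by (auto simp: opposite_faces_def)
  qed simp
qed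

lemma int_card_facets_in_opposite_faces:
  fixes V :: "'a::euclidean_space set"
  assumes indep: "\<not> affine_dependent V" and "W \<subseteq> V"
  shows "int (card {S. is_facet V k S \<and> S \<subseteq> opposite_faces V W}) =
    (\<Sum>r=1..card W. (-1)^(r-1) * int ((card V - r) choose (k + 1)) * int (card W choose r))"
proof -
  have "{S. is_facet V k S \<and> S \<subseteq> opposite_faces V W} =
      (\<lambda>K. convex hull K) ` {K. K \<subseteq> V \<and> card K = k + 1 \<and> \<not> W \<subseteq> K}"
    using convex_hull_subset_opposite_faces_iff[OF indep] by (auto simp: is_facet_def)
  moreover have "inj_on (\<lambda>K. convex hull K) {K. K \<subseteq> V \<and> card K = k + 1 \<and> \<not> W \<subseteq> K}"
    by (rule inj_on_subset[OF inj_on_convex_hull_Pow[OF indep]]) auto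
  ultimately show ?thesis
    using int_card_subsets_not_superset[OF aff_independent_finite[OF indep] assms(2), of "k + 1"]
    by (simp add: card_image)
qed

lemma facets_not_in_opposite_faces:
  fixes V :: "'a::euclidean_space set"
  assumes indep: "\<not> affine_dependent V" and "W \<noteq> {}"
  shows "{S. (\<exists>k. is_facet V k S) \<and> \<not> S \<subseteq> opposite_faces V W} =
    (\<lambda>K. convex hull K) ` {K. W \<subseteq> K \<and> K \<subseteq> V}"
proof (intro equalityI subsetI)
  fix S assume "S \<in> {S. (\<exists>k. is_facet V k S) \<and> \<not> S \<subseteq> opposite_faces V W}"
  then obtain K where "K \<subseteq> V" "S = convex hull K" "\<not> convex hull K \<subseteq> opposite_faces V W"
    by (auto simp: is_facet_def)
  then show "S \<in> (\<lambda>K. convex hull K) ` {K. W \<subseteq> K \<and> K \<subseteq> V}"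
    using convex_hull_subset_opposite_faces_iff[OF indep] by blast
next
  fix S assume "S \<in> (\<lambda>K. convex hull K) ` {K. W \<subseteq> K \<and> K \<subseteq> V}"
  then obtain K where K: "W \<subseteq> K" "K \<subseteq> V" "S = convex hull K"
    by blast
  then have "is_facet V (card K - 1) S"
    using assms(2) is_facet_convex_hull[OF indep] by blast
  moreover have "\<not> S \<subseteq> opposite_faces V W"
    using K assms(2) convex_hull_subset_opposite_faces_iff[OF indep] by blast
  ultimately show "S \<in> {S. (\<exists>k. is_facet V k S) \<and> \<not> S \<subseteq> opposite_faces V W}"
    by blast
qed

lemma card_facets_not_in_opposite_faces:
  fixes V :: "'a::euclidean_space set"
  assumes indep: "\<not> affine_dependent V" and "W \<subseteq> V" "W \<noteq> {}"
  shows "card {S. (\<exists>k. is_facet V k S) \<and> \<not> S \<subseteq> opposite_faces V W} = 2 ^ card (V - W)"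
proof -
  have "inj_on (\<lambda>K. convex hull K) {K. W \<subseteq> K \<and> K \<subseteq> V}"
    by (rule inj_on_subset[OF inj_on_convex_hull_Pow[OF indep]]) blast
  then show ?thesis
    unfolding facets_not_in_opposite_faces[OF indep assms(3)]
    by (simp add: card_image card_supersets[OF aff_independent_finite[OF indep] assms(2)])
qed

lemma card_facets_not_in_opposite_faces_codim:
  fixes V :: "'a::euclidean_space set"
  assumes indep: "\<not> affine_dependent V" and "W \<subseteq> V" "W \<noteq> {}" "card V = l + 1"
  shows "card {S \<in> {S. (\<exists>k. is_facet V k S) \<and> \<not> S \<subseteq> opposite_faces V W}.
      \<exists>k. is_facet V k S \<and> k + j = l} = card (V - W) choose j"
proof -
  let ?\<K> = "{K. W \<subseteq> K \<and> K \<subseteq> V \<and> card K + j = card V}"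
  have "{S \<in> (\<lambda>K. convex hull K) ` {K. W \<subseteq> K \<and> K \<subseteq> V}. \<exists>k. is_facet V k S \<and> k + j = l}
      = (\<lambda>K. convex hull K) ` ?\<K>"
  proof (intro equalityI subsetI)
    fix S assume "S \<in> {S \<in> (\<lambda>K. convex hull K) ` {K. W \<subseteq> K \<and> K \<subseteq> V}.
        \<exists>k. is_facet V k S \<and> k + j = l}"
    then obtain K k where "W \<subseteq> K" "K \<subseteq> V" "S = convex hull K" "is_facet V k S" "k + j = l"
      by blast
    then show "S \<in> (\<lambda>K. convex hull K) ` ?\<K>"
      using is_facet_convex_hull_iff[OF indep] assms(4) by auto
  next
    fix S assume "S \<in> (\<lambda>K. convex hull K) ` ?\<K>"
    then obtain K where K: "W \<subseteq> K" "K \<subseteq> V" "card K + j = card V" "S = convex hull K"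
      by blast
    have "K \<noteq> {}"
      using K(1) assms(3) by blast
    then have "card K \<noteq> 0"
      using K(2) aff_independent_finite[OF indep] finite_subset by fastforce
    then have "card K - 1 + j = l"
      using K(3) assms(4) by simp
    moreover have "is_facet V (card K - 1) S"
      using is_facet_convex_hull[OF indep K(2) \<open>K \<noteq> {}\<close>] K(4) by simp
    ultimately show "S \<in> {S \<in> (\<lambda>K. convex hull K) ` {K. W \<subseteq> K \<and> K \<subseteq> V}.
        \<exists>k. is_facet V k S \<and> k + j = l}"
      using K by blast
  qed
  moreover have "inj_on (\<lambda>K. convex hull K) ?\<K>"
    by (rule inj_on_subset[OF inj_on_convex_hull_Pow[OF indep]]) blast
  ultimately show ?thesis
    unfolding facets_not_in_opposite_faces[OF indep assms(3)]
    using card_supersets_with_card[OF aff_independent_finite[OF indep] assms(2)]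
    by (simp add: card_image)
qed

lemma card_le_facet_not_in_opposite_faces:
  fixes V :: "'a::euclidean_space set"
  assumes indep: "\<not> affine_dependent V" and "W \<noteq> {}"
    and "S \<in> {S. (\<exists>k. is_facet V k S) \<and> \<not> S \<subseteq> opposite_faces V W}" "is_facet V k S"
  shows "card W \<le> k + 1"
proof -
  obtain K where "W \<subseteq> K" "K \<subseteq> V" "S = convex hull K"
    using assms(3) by (auto simp: facets_not_in_opposite_faces[OF indep assms(2)])
  then show ?thesis
    using assms(4) is_facet_convex_hull_iff[OF indep] aff_independent_finite[OF indep]
    by (metis card_mono finite_subset)
qed

theorem lemma2p1:
  fixes V :: "'a::euclidean_space set" and l m :: nat and \<F> :: "'a set set"
  assumes indep: "\<not> affine_dependent V"
    and cardV: "card V = l + 1"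
    and ne: "\<F> \<noteq> {}"
    and faces: "\<forall>F\<in>\<F>. is_face V F"
    and m: "card \<F> = m"
  defines "P \<equiv> \<Union>\<F>"
  defines "\<C> \<equiv> {S. (\<exists>k. is_facet V k S) \<and> \<not> S \<subseteq> P}"
  shows "simplicial_complex {S. \<exists>K. K \<subseteq> V \<and> S = convex hull K \<and> S \<subseteq> P}
         \<and> \<Union>{S. \<exists>K. K \<subseteq> V \<and> S = convex hull K \<and> S \<subseteq> P} = P
         \<and> (\<forall>k. int (card {S. is_facet V k S \<and> S \<subseteq> P}) =
               (\<Sum>r=1..m. (-1)^(r-1) * int ((l + 1 - r) choose (k + 1)) * int (m choose r)))
         \<and> (\<forall>S\<in>\<C>. \<forall>k. is_facet V k S \<longrightarrow> l - k \<le> l + 1 - m)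
         \<and> (\<forall>j. card {S\<in>\<C>. \<exists>k. is_facet V k S \<and> k + j = l} = (l + 1 - m) choose j)
         \<and> card \<C> = 2 ^ (l + 1 - m)"
proof -
  obtain W where W: "W \<subseteq> V" "\<F> = (\<lambda>w. convex hull (V - {w})) ` W" and cardW: "card W = m"
    using faces_eq_opposite_faces_image[OF indep faces] m by metis
  have P: "P = opposite_faces V W" and "W \<noteq> {}"
    using W ne by (auto simp: P_def opposite_faces_def)
  have "card (V - W) = l + 1 - m"
    using W(1) cardV cardW aff_independent_finite[OF indep] by (metis card_Diff_subset finite_subset)
  moreover have "l - k \<le> l + 1 - m" if "S \<in> \<C>" "is_facet V k S" for S k
    using card_le_facet_not_in_opposite_faces[OF indep \<open>W \<noteq> {}\<close>] that cardW
    unfolding \<C>_def P by fastforce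
  ultimately show ?thesis
    using simplicial_complex_convex_hull_subsets[OF indep]
      Union_convex_hull_subsets_opposite_faces[OF W(1)]
      int_card_facets_in_opposite_faces[OF indep W(1)]
      card_facets_not_in_opposite_faces_codim[OF indep W(1) \<open>W \<noteq> {}\<close> cardV]
      card_facets_not_in_opposite_faces[OF indep W(1) \<open>W \<noteq> {}\<close>]
    unfolding \<C>_def P by (simp add: cardV cardW)
qed

end
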